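(* Let $t$ be an integer and let $G$ be a topologically $t$-chromatic graph with at least one edge. Then for every field $\mathbb{F}$, \[\overline{\xi}_l(G,\mathbb{F}) \geq \lceil t/2 \rceil + 1.\]
   Context: All graphs are finite, simple and undirected. For a vertex $v$, $N(v)$ is the set of neighbors of $v$, and $\{v\}\cup N(v)$ is its closed neighborhood. For $x,y\in\mathbb{F}^t$, $\langle x,y\rangle=\sum_{i=1}^t x_iy_i$ (over $\mathbb{C}$ one may use $\sum_i x_i\overline{y_i}$). An orthogonal representation of $G=(V,E)$ over $\mathbb{F}$ is an assignment of a vector $u_v\in\mathbb{F}^t$ (for some $t$) to every $v\in V$ such that $\langle u_v,u_v\rangle\neq 0$ for every $v$ and $\langle u_v,u_{v'}\rangle=0$ whenever $v,v'$ are adjacent. Its locality is $\max_{v\in V}\dim\big(\mathrm{span}\{u_{v'} : v'\in\{v\}\cup N(v)\}\big)$. The local orthogonality dimension $\overline{\xi}_l(G,\mathbb{F})$ is the minimum locality of an orthogonal representation of $G$ over $\mathbb{F}$. A graph $G$ is called topologically $t$-chromatic if $t\le \mathrm{Xind}(\mathrm{Hom}(K_2,G))+2$, where $\mathrm{Hom}(K_2,G)$ is the homomorphism complex of $K_2$ in $G$ (a free $\mathbb{Z}_2$-complex) and $\mathrm{Xind}$ denotes its cross-index (as in Simonyi–Tardif–Zsbán). *)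

theory Defs
  imports Complex_Main "HOL-Library.Function_Algebras"
begin

definition simple_graph :: "'v set \<Rightarrow> ('v \<Rightarrow> 'v \<Rightarrow> bool) \<Rightarrow> bool" where
  "simple_graph V E \<longleftrightarrow> finite V \<and>
     (\<forall>x y. E x y \<longrightarrow> x \<in> V \<and> y \<in> V \<and> x \<noteq> y \<and> E y x)"

definition nbhd :: "('v \<Rightarrow> 'v \<Rightarrow> bool) \<Rightarrow> 'v \<Rightarrow> 'v set" where
  "nbhd E v = {w. E v w}"

text \<open>Face poset of the homomorphism complex Hom(K_2,G): cells are pairs (A,B) of nonempty
  vertex sets with every vertex of A adjacent to every vertex of B, ordered componentwise,
  with the free Z_2-action swapping the two components.\<close>
definition hom_K2_cells :: "'v set \<Rightarrow> ('v \<Rightarrow> 'v \<Rightarrow> bool) \<Rightarrow> ('v set \<times> 'v set) set" where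
  "hom_K2_cells V E = {(A, B). A \<noteq> {} \<and> B \<noteq> {} \<and> A \<subseteq> V \<and> B \<subseteq> V \<and>
                              (\<forall>a\<in>A. \<forall>b\<in>B. E a b)}"

definition cell_le :: "('v set \<times> 'v set) \<Rightarrow> ('v set \<times> 'v set) \<Rightarrow> bool" where
  "cell_le c c' \<longleftrightarrow> fst c \<subseteq> fst c' \<and> snd c \<subseteq> snd c'"

definition cell_swap :: "('v set \<times> 'v set) \<Rightarrow> ('v set \<times> 'v set)" where
  "cell_swap c = (snd c, fst c)"

text \<open>The Z_2-poset Q_d of Simonyi--Tardif--Zsban: elements +-1,...,+-(d+1),
  x < y iff |x| < |y|, involution x \<mapsto> -x.\<close>
definition Q_poset :: "nat \<Rightarrow> int set" where
  "Q_poset d = {x. 1 \<le> \<bar>x\<bar> \<and> \<bar>x\<bar> \<le> int d + 1}"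

definition Q_le :: "int \<Rightarrow> int \<Rightarrow> bool" where
  "Q_le x y \<longleftrightarrow> x = y \<or> \<bar>x\<bar> < \<bar>y\<bar>"

definition Z2_poset_map :: "'v set \<Rightarrow> ('v \<Rightarrow> 'v \<Rightarrow> bool) \<Rightarrow> nat \<Rightarrow> ('v set \<times> 'v set \<Rightarrow> int) \<Rightarrow> bool" where
  "Z2_poset_map V E d f \<longleftrightarrow>
     (\<forall>c\<in>hom_K2_cells V E. f c \<in> Q_poset d \<and> f (cell_swap c) = - f c) \<and>
     (\<forall>c\<in>hom_K2_cells V E. \<forall>c'\<in>hom_K2_cells V E. cell_le c c' \<longrightarrow> Q_le (f c) (f c'))"

definition Xind_Hom_K2 :: "'v set \<Rightarrow> ('v \<Rightarrow> 'v \<Rightarrow> bool) \<Rightarrow> nat" where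
  "Xind_Hom_K2 V E = (LEAST d. \<exists>f. Z2_poset_map V E d f)"

definition topologically_chromatic :: "'v set \<Rightarrow> ('v \<Rightarrow> 'v \<Rightarrow> bool) \<Rightarrow> int \<Rightarrow> bool" where
  "topologically_chromatic V E t \<longleftrightarrow> t \<le> int (Xind_Hom_K2 V E) + 2"

text \<open>Vectors of F^k are modelled as functions nat \<Rightarrow> F vanishing outside {..<k}.\<close>
definition fscale :: "'f::field \<Rightarrow> (nat \<Rightarrow> 'f) \<Rightarrow> (nat \<Rightarrow> 'f)" where
  "fscale c x = (\<lambda>i. c * x i)"

definition inner_k :: "nat \<Rightarrow> (nat \<Rightarrow> 'f::field) \<Rightarrow> (nat \<Rightarrow> 'f) \<Rightarrow> 'f" where
  "inner_k k x y = (\<Sum>i<k. x i * y i)"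

definition orth_rep :: "'v set \<Rightarrow> ('v \<Rightarrow> 'v \<Rightarrow> bool) \<Rightarrow> nat \<Rightarrow> ('v \<Rightarrow> nat \<Rightarrow> 'f::field) \<Rightarrow> bool" where
  "orth_rep V E k u \<longleftrightarrow>
     (\<forall>v\<in>V. \<forall>i. k \<le> i \<longrightarrow> u v i = 0) \<and>
     (\<forall>v\<in>V. inner_k k (u v) (u v) \<noteq> 0) \<and>
     (\<forall>v w. E v w \<longrightarrow> inner_k k (u v) (u w) = 0)"

definition locality :: "'v set \<Rightarrow> ('v \<Rightarrow> 'v \<Rightarrow> bool) \<Rightarrow> ('v \<Rightarrow> nat \<Rightarrow> 'f::field) \<Rightarrow> nat" where
  "locality V E u = Max ((\<lambda>v. vector_space.dim fscale (u ` ({v} \<union> nbhd E v))) ` V)"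

definition local_orth_dim :: "'v set \<Rightarrow> ('v \<Rightarrow> 'v \<Rightarrow> bool) \<Rightarrow> 'f::field itself \<Rightarrow> nat" where
  "local_orth_dim V E F =
     (LEAST m. \<exists>k (u :: 'v \<Rightarrow> nat \<Rightarrow> 'f). orth_rep V E k u \<and> locality V E u = m)"

end

theory Submission imports Defs begin

text \<open>
  Let \<open>u\<close> be an orthogonal representation of locality \<open>d\<close>. For a cell \<open>(A, B)\<close> of Hom(K_2,G)
  and \<open>a \<in> A\<close>, the vector \<open>u a\<close> is orthogonal to all of \<open>u ` B\<close> but not to itself, so it lies
  outside the span of \<open>u ` B\<close>; as \<open>u a\<close> and \<open>u ` B\<close> live in the closed neighbourhood of \<open>a\<close>,
  both sides span spaces of dimension between 1 and \<open>d - 1\<close>, and the two spans differ.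
  Sending \<open>(A, B)\<close> to \<open>\<plusminus>(dim A + dim B - 1)\<close>, with the sign decided by comparing the
  dimensions and, on ties, the two spans in a fixed linear order, is an order-preserving
  Z_2-map into Q_(2d-4): growing a cell either raises a dimension or leaves both spans unchanged.
  Hence the cross-index is at most \<open>2d - 4\<close>, i.e. \<open>t \<le> 2d - 2\<close>.
\<close>

interpretation fvec: vector_space "fscale :: 'f::field \<Rightarrow> (nat \<Rightarrow> 'f) \<Rightarrow> (nat \<Rightarrow> 'f)"
  by unfold_locales (auto simp: fscale_def fun_eq_iff algebra_simps)

context vector_space begin

lemma dim_mono_finite:
  assumes "finite W" "V \<subseteq> span W" shows "dim V \<le> dim W"
proof -
  obtain B where B: "B \<subseteq> W" "independent B" "W \<subseteq> span B" "card B = dim W"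
    using basis_exists by blast
  have "V \<subseteq> span B"
    using assms(2) B(3) by (metis span_mono span_span subset_trans)
  moreover have "finite B" using B(1) assms(1) finite_subset by blast
  ultimately show ?thesis using dim_le_card B(4) by metis
qed

lemma dim_insert_finite:
  assumes "finite S" "x \<notin> span S" shows "dim (insert x S) = Suc (dim S)"
proof -
  obtain B where B: "B \<subseteq> S" "independent B" "S \<subseteq> span B" "card B = dim S"
    using basis_exists by blast
  have "span B = span S" using B by (metis span_eq subset_trans)
  with assms(2) have "x \<notin> span B" by simp
  show ?thesis
  proof (rule dim_unique[of "insert x B"])
    show "insert x B \<subseteq> insert x S" using B(1) by blast
    show "insert x S \<subseteq> span (insert x B)"
      using B(3) by (metis subset_insertI subset_trans span_mono span_superset insert_subset)
    show "independent (insert x B)" using independent_insertI \<open>x \<notin> span B\<close> B(2) by blast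
    have "x \<notin> B" using \<open>x \<notin> span B\<close> span_superset by blast
    then show "card (insert x B) = Suc (dim S)"
      using B(1,4) assms(1) finite_subset by fastforce
  qed
qed

lemma span_eq_if_dim_le_finite:
  assumes "finite T" "S \<subseteq> T" "dim T \<le> dim S" shows "span S = span T"
proof (rule ccontr)
  assume "span S \<noteq> span T"
  moreover have "S \<subseteq> span T" using assms(2) span_superset by blast
  ultimately obtain x where x: "x \<in> T" "x \<notin> span S"
    by (metis span_eq subsetI)
  have "finite S" using assms(1,2) by (rule rev_finite_subset)
  then have "dim (insert x S) = Suc (dim S)" using x(2) by (rule dim_insert_finite)
  moreover have "insert x S \<subseteq> span T" using x(1) \<open>S \<subseteq> span T\<close> span_superset by blast
  then have "dim (insert x S) \<le> dim T" using assms(1) by (rule dim_mono_finite[rotated])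
  ultimately show False using assms(3) by simp
qed

lemma dim_ge_1_if_nonzero:
  assumes "finite S" "x \<in> S" "x \<noteq> 0" shows "1 \<le> dim S"
proof -
  have "dim (insert x {}) = Suc (dim {})"
    using assms(3) by (intro dim_insert_finite) simp_all
  moreover have "dim {x} \<le> dim S"
    using assms(1,2) span_superset by (intro dim_mono_finite) auto
  ultimately show ?thesis by simp
qed

end

lemma inner_k_scale_add_right:
  "inner_k k w (fscale c x + y) = c * inner_k k w x + inner_k k w y"
  unfolding inner_k_def fscale_def plus_fun_def
  by (simp add: sum_distrib_left sum.distrib algebra_simps)

lemma inner_k_span_eq_0:
  fixes S :: "(nat \<Rightarrow> 'f::field) set"
  assumes "x \<in> fvec.span S" "\<forall>s\<in>S. inner_k k w s = 0"
  shows "inner_k k w x = 0"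
  using assms(1)
proof (induction rule: fvec.span_induct_alt)
  case base
  show ?case by (simp add: inner_k_def)
next
  case (step c s y)
  then show ?case using assms(2) unfolding inner_k_scale_add_right by simp
qed

lemma hom_K2_cells_swap:
  assumes "simple_graph V E" "(A, B) \<in> hom_K2_cells V E"
  shows "(B, A) \<in> hom_K2_cells V E"
  using assms unfolding simple_graph_def hom_K2_cells_def by auto

lemma hom_K2_cells_finite_image:
  assumes "simple_graph V E" "(A, B) \<in> hom_K2_cells V E"
  shows "finite (u ` A)" "finite (u ` B)"
proof -
  have "finite V" "A \<subseteq> V" "B \<subseteq> V"
    using assms unfolding simple_graph_def hom_K2_cells_def by auto
  then show "finite (u ` A)" "finite (u ` B)" by (auto intro: finite_subset)
qed

lemma orth_rep_notin_span_opposite_side: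
  fixes u :: "'v \<Rightarrow> nat \<Rightarrow> 'f::field"
  assumes "orth_rep V E k u" "(A, B) \<in> hom_K2_cells V E" "a \<in> A"
  shows "u a \<notin> fvec.span (u ` B)"
proof
  assume "u a \<in> fvec.span (u ` B)"
  moreover have "\<forall>s\<in>u ` B. inner_k k (u a) s = 0"
    using assms unfolding orth_rep_def hom_K2_cells_def by auto
  ultimately have "inner_k k (u a) (u a) = 0" by (rule inner_k_span_eq_0)
  moreover have "a \<in> V" using assms(2,3) unfolding hom_K2_cells_def by auto
  ultimately show False using assms(1) unfolding orth_rep_def by blast
qed

lemma orth_rep_cell_dim_pos:
  fixes u :: "'v \<Rightarrow> nat \<Rightarrow> 'f::field"
  assumes "simple_graph V E" "orth_rep V E k u" "(A, B) \<in> hom_K2_cells V E"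
  shows "1 \<le> fvec.dim (u ` A)"
proof -
  obtain a where "a \<in> A" using assms(3) unfolding hom_K2_cells_def by auto
  moreover have "u a \<notin> fvec.span (u ` B)"
    using assms(2,3) \<open>a \<in> A\<close> by (rule orth_rep_notin_span_opposite_side)
  then have "u a \<noteq> 0" by (metis fvec.span_zero)
  ultimately show ?thesis
    using hom_K2_cells_finite_image[OF assms(1,3)] by (intro fvec.dim_ge_1_if_nonzero) auto
qed

lemma orth_rep_cell_dim_less_locality:
  fixes u :: "'v \<Rightarrow> nat \<Rightarrow> 'f::field"
  assumes "simple_graph V E" "orth_rep V E k u" "(A, B) \<in> hom_K2_cells V E"
  shows "fvec.dim (u ` B) < locality V E u"
proof -
  obtain a where a: "a \<in> A" using assms(3) unfolding hom_K2_cells_def by auto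
  have "a \<in> V" "finite V" "nbhd E a \<subseteq> V"
    using assms(1,3) a unfolding simple_graph_def hom_K2_cells_def nbhd_def by auto
  define N where "N = u ` ({a} \<union> nbhd E a)"
  have "finite N" using \<open>finite V\<close> \<open>nbhd E a \<subseteq> V\<close> unfolding N_def by (auto intro: finite_subset)
  have "insert (u a) (u ` B) \<subseteq> N"
    using assms(3) a unfolding N_def hom_K2_cells_def nbhd_def by auto
  have "fvec.dim (u ` B) < fvec.dim (insert (u a) (u ` B))"
    by (simp add: fvec.dim_insert_finite[OF hom_K2_cells_finite_image(2)[OF assms(1,3)]
          orth_rep_notin_span_opposite_side[OF assms(2,3) a]])
  also have "\<dots> \<le> fvec.dim N"
    using \<open>finite N\<close> \<open>insert (u a) (u ` B) \<subseteq> N\<close>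
    by (meson fvec.dim_mono_finite fvec.span_superset subset_trans)
  also have "\<dots> \<le> locality V E u"
    unfolding locality_def N_def using \<open>finite V\<close> \<open>a \<in> V\<close> by (intro Max_ge) auto
  finally show ?thesis .
qed

text \<open>The relation \<open>r\<close> breaks ties between sides of equal dimension; it will be a linear order
  on subspaces, so the sign flips under swapping exactly when the two spans differ.\<close>

fun signed_dim_index ::
    "('v \<Rightarrow> nat \<Rightarrow> 'f::field) \<Rightarrow> (nat \<Rightarrow> 'f) set rel \<Rightarrow> 'v set \<times> 'v set \<Rightarrow> int" where
  "signed_dim_index u r (A, B) =
     (let a = fvec.dim (u ` A); b = fvec.dim (u ` B); m = int a + int b - 1 in
      if b < a \<or> (a = b \<and> (fvec.span (u ` A), fvec.span (u ` B)) \<in> r) then m else - m)"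

declare signed_dim_index.simps [simp del]

lemma abs_signed_dim_index:
  "1 \<le> fvec.dim (u ` A) \<Longrightarrow>
    \<bar>signed_dim_index u r (A, B)\<bar> = int (fvec.dim (u ` A)) + int (fvec.dim (u ` B)) - 1"
  by (simp add: signed_dim_index.simps Let_def)

lemma linear_order_asym_total:
  assumes "linear_order r" "x \<noteq> y" shows "(x, y) \<in> r \<longleftrightarrow> (y, x) \<notin> r"
  using assms unfolding linear_order_on_def partial_order_on_def total_on_def antisym_def by blast

lemma signed_dim_index_swap:
  assumes "linear_order r" "fvec.span (u ` A) \<noteq> fvec.span (u ` B)"
  shows "signed_dim_index u r (B, A) = - signed_dim_index u r (A, B)"
proof -
  have "(fvec.span (u ` A), fvec.span (u ` B)) \<in> r \<longleftrightarrow> (fvec.span (u ` B), fvec.span (u ` A)) \<notin> r"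
    using assms by (rule linear_order_asym_total)
  then show ?thesis
    unfolding signed_dim_index.simps Let_def
    by (cases rule: linorder_cases[of "fvec.dim (u ` A)" "fvec.dim (u ` B)"]) (auto simp: add.commute)
qed

lemma signed_dim_index_mono:
  fixes u :: "'v \<Rightarrow> nat \<Rightarrow> 'f::field"
  assumes "simple_graph V E" "orth_rep V E k u"
    and c: "(A, B) \<in> hom_K2_cells V E" and c': "(A', B') \<in> hom_K2_cells V E"
    and "cell_le (A, B) (A', B')"
  shows "Q_le (signed_dim_index u r (A, B)) (signed_dim_index u r (A', B'))"
proof -
  have sub: "u ` A \<subseteq> u ` A'" "u ` B \<subseteq> u ` B'"
    using assms(5) unfolding cell_le_def by auto
  note fin = hom_K2_cells_finite_image[OF assms(1) c']
  have dims: "fvec.dim (u ` A) \<le> fvec.dim (u ` A')" "fvec.dim (u ` B) \<le> fvec.dim (u ` B')"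
    by (rule fvec.dim_mono_finite[OF fin(1) subset_trans[OF sub(1) fvec.span_superset]],
        rule fvec.dim_mono_finite[OF fin(2) subset_trans[OF sub(2) fvec.span_superset]])
  show ?thesis
  proof (cases "fvec.dim (u ` A) = fvec.dim (u ` A') \<and> fvec.dim (u ` B) = fvec.dim (u ` B')")
    case True
    then have "fvec.span (u ` A) = fvec.span (u ` A')" "fvec.span (u ` B) = fvec.span (u ` B')"
      using fvec.span_eq_if_dim_le_finite[OF fin(1) sub(1)]
        fvec.span_eq_if_dim_le_finite[OF fin(2) sub(2)] by simp_all
    with True have "signed_dim_index u r (A, B) = signed_dim_index u r (A', B')"
      by (simp only: signed_dim_index.simps)
    then show ?thesis unfolding Q_le_def ..
  next
    case False
    with dims have "fvec.dim (u ` A) + fvec.dim (u ` B) < fvec.dim (u ` A') + fvec.dim (u ` B')"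
      by linarith
    moreover note abs_signed_dim_index[OF orth_rep_cell_dim_pos[OF assms(1,2) c], of r B]
      abs_signed_dim_index[OF orth_rep_cell_dim_pos[OF assms(1,2) c'], of r B']
    ultimately show ?thesis unfolding Q_le_def by linarith
  qed
qed

lemma Z2_poset_map_signed_dim_index:
  fixes u :: "'v \<Rightarrow> nat \<Rightarrow> 'f::field"
  assumes "simple_graph V E" "orth_rep V E k u" "linear_order r"
  shows "Z2_poset_map V E (2 * locality V E u - 4) (signed_dim_index u r)"
  unfolding Z2_poset_map_def
proof (intro conjI ballI impI)
  fix c assume c: "c \<in> hom_K2_cells V E"
  obtain A B where AB: "c = (A, B)" by fastforce
  have cell: "(A, B) \<in> hom_K2_cells V E" "(B, A) \<in> hom_K2_cells V E"
    using c hom_K2_cells_swap[OF assms(1)] unfolding AB by auto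
  note pos = orth_rep_cell_dim_pos[OF assms(1,2) cell(1)] orth_rep_cell_dim_pos[OF assms(1,2) cell(2)]
  note less = orth_rep_cell_dim_less_locality[OF assms(1,2) cell(1)]
    orth_rep_cell_dim_less_locality[OF assms(1,2) cell(2)]
  have "\<bar>signed_dim_index u r (A, B)\<bar> = int (fvec.dim (u ` A)) + int (fvec.dim (u ` B)) - 1"
    by (rule abs_signed_dim_index[OF pos(1)])
  with pos less show "signed_dim_index u r c \<in> Q_poset (2 * locality V E u - 4)"
    unfolding AB Q_poset_def mem_Collect_eq by linarith
  obtain a where "a \<in> A" using cell(1) unfolding hom_K2_cells_def by auto
  then have "u a \<in> fvec.span (u ` A)" by (simp add: fvec.span_base)
  then have "fvec.span (u ` A) \<noteq> fvec.span (u ` B)"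
    using orth_rep_notin_span_opposite_side[OF assms(2) cell(1) \<open>a \<in> A\<close>] by auto
  then have "signed_dim_index u r (B, A) = - signed_dim_index u r (A, B)"
    by (rule signed_dim_index_swap[OF assms(3)])
  then show "signed_dim_index u r (cell_swap c) = - signed_dim_index u r c"
    by (simp only: AB cell_swap_def prod.sel)
next
  fix c c' assume "c \<in> hom_K2_cells V E" "c' \<in> hom_K2_cells V E" "cell_le c c'"
  then show "Q_le (signed_dim_index u r c) (signed_dim_index u r c')"
    using signed_dim_index_mono[OF assms(1,2)] by (cases c, cases c') blast
qed

lemma Xind_Hom_K2_le_locality:
  fixes u :: "'v \<Rightarrow> nat \<Rightarrow> 'f::field"
  assumes "simple_graph V E" "E x y" "orth_rep V E k u"
  shows "int (Xind_Hom_K2 V E) + 2 \<le> 2 * int (locality V E u) - 2"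
proof -
  obtain r :: "(nat \<Rightarrow> 'f) set rel" where "Well_order r" "Field r = UNIV"
    using well_ordering by (elim exE conjE)
  then have "linear_order r" unfolding well_order_on_def by simp
  have "({x}, {y}) \<in> hom_K2_cells V E"
    using assms(1,2) unfolding simple_graph_def hom_K2_cells_def by auto
  then have "1 \<le> fvec.dim (u ` {x})" "fvec.dim (u ` {x}) < locality V E u"
    by (rule orth_rep_cell_dim_pos[OF assms(1,3)],
        rule orth_rep_cell_dim_less_locality[OF assms(1,3) hom_K2_cells_swap[OF assms(1)]])
  moreover have "Xind_Hom_K2 V E \<le> 2 * locality V E u - 4"
    unfolding Xind_Hom_K2_def
    by (rule Least_le, rule exI, rule Z2_poset_map_signed_dim_index[OF assms(1,3) \<open>linear_order r\<close>])
  ultimately show ?thesis by linarith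
qed

lemma orth_rep_exists:
  assumes sg: "simple_graph V E"
  shows "\<exists>k (u :: 'v \<Rightarrow> nat \<Rightarrow> 'f::field). orth_rep V E k u"
proof -
  have fin: "finite V" using sg unfolding simple_graph_def by blast
  obtain h where h: "bij_betw h V {0..<card V}" using ex_bij_betw_finite_nat[OF fin] by blast
  define u :: "'v \<Rightarrow> nat \<Rightarrow> 'f" where "u v = (\<lambda>i. if i = h v then 1 else 0)" for v
  have hv: "h v < card V" if "v \<in> V" for v using h that unfolding bij_betw_def by auto
  have "orth_rep V E (card V) u"
    unfolding orth_rep_def
  proof (intro conjI ballI allI impI)
    fix v i assume "v \<in> V" "card V \<le> i"
    then show "u v i = 0" using hv unfolding u_def by fastforce
  next
    fix v assume v: "v \<in> V"
    have "inner_k (card V) (u v) (u v) = (\<Sum>i<card V. if i = h v then 1 else 0)"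
      unfolding inner_k_def u_def by (intro sum.cong) auto
    also have "\<dots> = 1" using hv[OF v] by simp
    finally show "inner_k (card V) (u v) (u v) \<noteq> 0" by simp
  next
    fix v w assume e: "E v w"
    have "v \<in> V" "w \<in> V" "v \<noteq> w" using e sg unfolding simple_graph_def by blast+
    then have "h v \<noteq> h w" using h unfolding bij_betw_def inj_on_def by blast
    then show "inner_k (card V) (u v) (u w) = 0"
      unfolding inner_k_def u_def by (intro sum.neutral) auto
  qed
  then show ?thesis by blast
qed

lemma local_orth_dim_attained:
  assumes "simple_graph V E"
  obtains k and u :: "'v \<Rightarrow> nat \<Rightarrow> 'f::field"
  where "orth_rep V E k u" "locality V E u = local_orth_dim V E TYPE('f)"
proof -
  obtain k0 and u0 :: "'v \<Rightarrow> nat \<Rightarrow> 'f" where "orth_rep V E k0 u0"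
    using orth_rep_exists[OF assms] by (elim exE)
  then have "\<exists>m k (u :: 'v \<Rightarrow> nat \<Rightarrow> 'f). orth_rep V E k u \<and> locality V E u = m" by blast
  then have "\<exists>k (u :: 'v \<Rightarrow> nat \<Rightarrow> 'f). orth_rep V E k u \<and> locality V E u = local_orth_dim V E TYPE('f)"
    unfolding local_orth_dim_def by (rule LeastI_ex)
  then show ?thesis using that by (elim exE conjE)
qed

theorem mainTheorem1:
  fixes V :: "'v set" and E :: "'v \<Rightarrow> 'v \<Rightarrow> bool" and t :: int
  assumes "simple_graph V E"
    and "\<exists>x y. E x y"
    and "topologically_chromatic V E t"
  shows "int (local_orth_dim V E TYPE('f::field)) \<ge> \<lceil>real_of_int t / 2\<rceil> + 1"
proof -
  obtain x y where "E x y" using assms(2) by blast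
  obtain k and u :: "'v \<Rightarrow> nat \<Rightarrow> 'f" where u: "orth_rep V E k u"
    and d: "locality V E u = local_orth_dim V E TYPE('f)"
    using local_orth_dim_attained[OF assms(1)] by blast
  have "t \<le> 2 * int (local_orth_dim V E TYPE('f)) - 2"
    using Xind_Hom_K2_le_locality[OF assms(1) \<open>E x y\<close> u] assms(3)
    unfolding d topologically_chromatic_def by linarith
  then have "\<lceil>real_of_int t / 2\<rceil> \<le> int (local_orth_dim V E TYPE('f)) - 1"
    by (simp add: ceiling_le_iff field_simps) linarith
  then show ?thesis by linarith
qed

end
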